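(* Let $k\ge 4$ be even and $n$ odd with $2k\le n$ and $n\equiv\pm 2\pmod{k-1}$. Then $$\chi_c(\mathrm{Pet}(n,k))\ \le\ \frac{2n(k-1)}{(n-4)(k-2)}.$$
   Context: For integers $n,k$ with $2<2k\le n$, the generalized Petersen graph $\mathrm{Pet}(n,k)$ has vertex set $\{u_0,\dots,u_{n-1}\}\cup\{v_0,\dots,v_{n-1}\}$ and edge set $\{u_iu_{i+1}\}\cup\{u_iv_i\}\cup\{v_iv_{i+k}\}$, indices modulo $n$. For integers $p\ge 2q\ge 2$, the circular complete graph $K_{p/q}$ has vertex set $\{0,\dots,p-1\}$ with $i\sim j$ iff $q\le|i-j|\le p-q$; the circular chromatic number $\chi_c(G)$ is the minimum of $p/q$ over all such $p,q$ for which $G$ admits a homomorphism to $K_{p/q}$. *)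

theory Defs
  imports Complex_Main "HOL-Number_Theory.Cong"
begin

text \<open>Vertices of the generalized Petersen graph: outer u_i and inner v_i.\<close>
datatype pvert = U nat | V nat

definition pet_verts :: "nat \<Rightarrow> pvert set" where
  "pet_verts n = {U i | i. i < n} \<union> {V i | i. i < n}"

definition pet_arc :: "nat \<Rightarrow> nat \<Rightarrow> pvert \<Rightarrow> pvert \<Rightarrow> bool" where
  "pet_arc n k a b \<longleftrightarrow> (\<exists>i<n. (a = U i \<and> b = U ((i + 1) mod n))
                              \<or> (a = U i \<and> b = V i)
                              \<or> (a = V i \<and> b = V ((i + k) mod n)))"

definition pet_adj :: "nat \<Rightarrow> nat \<Rightarrow> pvert \<Rightarrow> pvert \<Rightarrow> bool" where
  "pet_adj n k a b \<longleftrightarrow> pet_arc n k a b \<or> pet_arc n k b a"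

definition circ_adj :: "nat \<Rightarrow> nat \<Rightarrow> nat \<Rightarrow> nat \<Rightarrow> bool" where
  "circ_adj p q i j \<longleftrightarrow> i < p \<and> j < p \<and>
     int q \<le> \<bar>int i - int j\<bar> \<and> \<bar>int i - int j\<bar> \<le> int p - int q"

definition circ_hom :: "'a set \<Rightarrow> ('a \<Rightarrow> 'a \<Rightarrow> bool) \<Rightarrow> nat \<Rightarrow> nat \<Rightarrow> ('a \<Rightarrow> nat) \<Rightarrow> bool" where
  "circ_hom Vs E p q f \<longleftrightarrow> (\<forall>x\<in>Vs. f x < p) \<and>
     (\<forall>x\<in>Vs. \<forall>y\<in>Vs. E x y \<longrightarrow> circ_adj p q (f x) (f y))"

text \<open>Circular chromatic number: the least p/q (p >= 2q >= 2) admitting a homomorphism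
  to K_{p/q} (taken as an infimum; for finite loopless graphs it is attained).\<close>
definition circ_chrom :: "'a set \<Rightarrow> ('a \<Rightarrow> 'a \<Rightarrow> bool) \<Rightarrow> real" where
  "circ_chrom Vs E = Inf {real p / real q | p q. 2 * q \<le> p \<and> 1 \<le> q \<and> (\<exists>f. circ_hom Vs E p q f)}"

end

theory Submission
  imports Defs
begin

text \<open>Label \<open>u\<^sub>i\<close> by \<open>i m\<close> and \<open>v\<^sub>i\<close> by \<open>i m + (n - 1)/2\<close> modulo \<open>n\<close>. Adjacent vertices
  then differ by \<open>\<plusminus>m\<close>, \<open>\<plusminus>(n - 1)/2\<close> or \<open>\<plusminus>k m\<close> modulo \<open>n\<close>, so this is a homomorphism into
  \<open>K\<^bsub>n/q\<^esub>\<close> as soon as these three residues lie in \<open>[q, n - q]\<close>. If \<open>n \<equiv> 2 e (mod k - 1)\<close>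
  with \<open>e = \<plusminus>1\<close>, then \<open>m = (n (k - 2)/2 + e)/(k - 1)\<close> is an integer with \<open>k m \<equiv> m + e (mod n)\<close>,
  and \<open>q = min m (m + e)\<close> works and satisfies \<open>n/q \<le> 2 n (k - 1)/((n - 4)(k - 2))\<close>.\<close>

definition circ_gap :: "nat \<Rightarrow> nat \<Rightarrow> int \<Rightarrow> bool" where
  "circ_gap p q d \<longleftrightarrow> int q \<le> d mod int p \<and> d mod int p \<le> int p - int q"

lemma circ_gap_cong:
  assumes "[d = d'] (mod int p)"
  shows "circ_gap p q d \<longleftrightarrow> circ_gap p q d'"
  using assms unfolding circ_gap_def cong_def by simp

lemma circ_gapI:
  assumes "1 \<le> q" "int q \<le> d" "d \<le> int p - int q"
  shows "circ_gap p q d"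
  using assms unfolding circ_gap_def by simp

lemma circ_gap_uminus:
  assumes "p > 0"
  shows "circ_gap p q (- d) \<longleftrightarrow> circ_gap p q d"
  using assms unfolding circ_gap_def zmod_zminus1_eq_if by auto

lemma circ_adj_iff_circ_gap:
  assumes "a < p" "b < p" "1 \<le> q"
  shows "circ_adj p q a b \<longleftrightarrow> circ_gap p q (int a - int b)"
proof (cases "b \<le> a")
  case True
  then have "(int a - int b) mod int p = int a - int b"
    using assms by simp
  then show ?thesis using True assms unfolding circ_adj_def circ_gap_def by auto
next
  case False
  have "(int a - int b) mod int p = (int a - int b + int p) mod int p"
    by simp
  also have "\<dots> = int a - int b + int p"
    using False assms by (intro mod_pos_pos_trivial) auto
  finally have "(int a - int b) mod int p = int a - int b + int p" .
  then show ?thesis using False assms unfolding circ_adj_def circ_gap_def by auto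
qed

lemma circ_hom_of_circ_gap:
  fixes g :: "'a \<Rightarrow> int"
  assumes "p > 0" "1 \<le> q"
    and gap: "\<And>x y. x \<in> Vs \<Longrightarrow> y \<in> Vs \<Longrightarrow> E x y \<Longrightarrow> circ_gap p q (g x - g y)"
  shows "circ_hom Vs E p q (\<lambda>x. nat (g x mod int p))"
  unfolding circ_hom_def
proof (intro conjI ballI impI)
  fix x show "nat (g x mod int p) < p" using \<open>p > 0\<close> by (simp add: nat_less_iff)
next
  fix x y assume "x \<in> Vs" "y \<in> Vs" "E x y"
  have "[g x mod int p - g y mod int p = g x - g y] (mod int p)"
    by (simp add: cong_def mod_diff_eq)
  then show "circ_adj p q (nat (g x mod int p)) (nat (g y mod int p))"
    using gap[OF \<open>x \<in> Vs\<close> \<open>y \<in> Vs\<close> \<open>E x y\<close>] assms(1,2)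
    by (simp add: circ_adj_iff_circ_gap nat_less_iff circ_gap_cong)
qed

lemma circ_chrom_le_of_circ_hom:
  assumes "circ_hom Vs E p q f" "2 * q \<le> p" "1 \<le> q"
  shows "circ_chrom Vs E \<le> real p / real q"
  unfolding circ_chrom_def
proof (rule cInf_lower)
  show "real p / real q \<in> {real p / real q | p q. 2 * q \<le> p \<and> 1 \<le> q \<and> (\<exists>f. circ_hom Vs E p q f)}"
    using assms by blast
  show "bdd_below {real p / real q | p q. 2 * q \<le> p \<and> 1 \<le> q \<and> (\<exists>f. circ_hom Vs E p q f)}"
    by (rule bdd_belowI[of _ 0]) auto
qed

definition pet_label :: "int \<Rightarrow> int \<Rightarrow> pvert \<Rightarrow> int" where
  "pet_label m c x = (case x of U i \<Rightarrow> int i * m | V i \<Rightarrow> int i * m + c)"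

lemma cong_int_add_mod:
  "[int ((i + s) mod n) = int i + int s] (mod int n)"
  by (simp add: cong_def zmod_int)

lemma pet_arc_circ_gap:
  assumes "pet_arc n k x y"
    and "circ_gap n q m" "circ_gap n q c" "circ_gap n q (int k * m)"
  shows "circ_gap n q (pet_label m c y - pet_label m c x)"
proof -
  obtain i where "i < n" and
    "(x = U i \<and> y = U ((i + 1) mod n)) \<or> (x = U i \<and> y = V i)
       \<or> (x = V i \<and> y = V ((i + k) mod n))"
    using assms(1) unfolding pet_arc_def by blast
  then consider "x = U i" "y = U ((i + 1) mod n)" | "x = U i" "y = V i"
    | "x = V i" "y = V ((i + k) mod n)"
    by blast
  then show ?thesis
  proof cases
    case 1
    have "[int ((i + 1) mod n) * m - int i * m = (int i + 1) * m - int i * m] (mod int n)"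
      using cong_int_add_mod[of i 1 n] by (intro cong_diff cong_mult) auto
    then show ?thesis using 1 assms(2) by (simp add: pet_label_def circ_gap_cong algebra_simps)
  next
    case 2
    then show ?thesis using assms(3) by (simp add: pet_label_def)
  next
    case 3
    have "[int ((i + k) mod n) * m - int i * m = (int i + int k) * m - int i * m] (mod int n)"
      using cong_int_add_mod[of i k n] by (intro cong_diff cong_mult) auto
    then show ?thesis using 3 assms(4) by (simp add: pet_label_def circ_gap_cong algebra_simps)
  qed
qed

lemma pet_circ_hom_linear:
  assumes "n > 0" "1 \<le> q"
    and "circ_gap n q m" "circ_gap n q c" "circ_gap n q (int k * m)"
  shows "circ_hom (pet_verts n) (pet_adj n k) n q (\<lambda>x. nat (pet_label m c x mod int n))"
proof (rule circ_hom_of_circ_gap[OF assms(1,2)])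
  fix x y assume "pet_adj n k x y"
  then show "circ_gap n q (pet_label m c x - pet_label m c y)"
    unfolding pet_adj_def
    using pet_arc_circ_gap[OF _ assms(3-5)] circ_gap_uminus[OF assms(1)]
    by (metis minus_diff_eq)
qed

lemma petersen_parameters:
  fixes n k e :: int
  assumes k: "k \<ge> 4" "even k" and n: "2 * k \<le> n" and e: "e = 1 \<or> e = -1"
    and dvd: "(k - 1) dvd (n - 2 * e)"
  obtains m :: int and q :: nat where
    "[k * m = m + e] (mod n)" "int q = min m (m + e)" "1 \<le> q" "2 * m + e \<le> n"
    "(n - 4) * (k - 2) \<le> 2 * (k - 1) * int q"
proof -
  obtain j where "k = 2 * j" using \<open>even k\<close> by (rule evenE)
  define h where "h = j - 1"
  have h: "k = 2 * h + 2" using \<open>k = 2 * j\<close> by (simp add: h_def)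
  obtain t where t: "n - 2 * e = (k - 1) * t" using dvd by blast
  define m where "m = t * h + e"
  have m_eq: "(k - 1) * m = n * h + e"
  proof -
    have "(k - 1) * m = (k - 1) * t * h + (k - 1) * e" by (simp add: m_def algebra_simps)
    also have "\<dots> = (n - 2 * e) * h + (2 * h + 1) * e" using t h by simp
    also have "\<dots> = n * h + e" by (simp add: algebra_simps)
    finally show ?thesis .
  qed
  have "[k * m = m + e] (mod n)"
  proof -
    have "k * m = m + e + n * h" using m_eq by (simp add: algebra_simps)
    then show ?thesis by (simp add: cong_def)
  qed
  moreover have "m \<ge> 2"
  proof -
    have "1 * n \<le> h * n" using h k n by (intro mult_right_mono) auto
    moreover have "(k - 1) * (m - 1) = h * n + e - (k - 1)" using m_eq by (simp add: algebra_simps)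
    ultimately have "(k - 1) * (m - 1) > 0" using e k n by linarith
    then show ?thesis using k by (simp add: zero_less_mult_iff)
  qed
  moreover have "2 * m + e \<le> n"
  proof -
    have "(k - 1) * (2 * m + e) = n * (k - 2) + (k + 1) * e"
      using m_eq h by (simp add: algebra_simps)
    also have "\<dots> \<le> (k - 1) * n" using e k n by (auto simp: algebra_simps)
    finally show ?thesis using k by (simp add: mult_le_cancel_left)
  qed
  moreover have "(n - 4) * (k - 2) \<le> 2 * (k - 1) * min m (m + e)"
  proof -
    have "2 * (k - 1) * m = n * (k - 2) + 2 * e" using m_eq h by (simp add: algebra_simps)
    then show ?thesis using e k by (auto simp: algebra_simps)
  qed
  ultimately show ?thesis
    using e by (intro that[of m "nat (min m (m + e))"]) auto
qed

theorem corollary6: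
  fixes n k :: nat
  assumes "k \<ge> 4" and "even k" and "odd n" and "2 * k \<le> n"
    and "[int n = 2] (mod int (k - 1)) \<or> [int n = - 2] (mod int (k - 1))"
  shows "circ_chrom (pet_verts n) (pet_adj n k)
           \<le> (2 * real n * (real k - 1)) / ((real n - 4) * (real k - 2))"
proof -
  obtain e :: int where e: "e = 1 \<or> e = -1" and "(int k - 1) dvd (int n - 2 * e)"
    using assms(1,5) that[of 1] that[of "-1"] by (auto simp: cong_iff_dvd_diff of_nat_diff)
  then obtain m q where km: "[int k * m = m + e] (mod int n)" and q: "int q = min m (m + e)" "1 \<le> q"
    and "2 * m + e \<le> int n" and bound: "(int n - 4) * (int k - 2) \<le> 2 * (int k - 1) * int q"
    using petersen_parameters[of "int k" "int n" e] assms(1,2,4) by auto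
  define c where "c = (int n - 1) div 2"
  have "2 * c = int n - 1" using \<open>odd n\<close> unfolding c_def by (auto elim: oddE)
  then have "2 * q < n" "circ_gap n q m" "circ_gap n q (int k * m)" "circ_gap n q c"
    using q e \<open>2 * m + e \<le> int n\<close> circ_gap_cong[OF km]
    by (auto intro!: circ_gapI)
  then have "circ_chrom (pet_verts n) (pet_adj n k) \<le> real n / real q"
    using pet_circ_hom_linear[of n q m c k] q(2)
    by (intro circ_chrom_le_of_circ_hom) auto
  also have "\<dots> \<le> (2 * real n * (real k - 1)) / ((real n - 4) * (real k - 2))"
  proof -
    have "real_of_int ((int n - 4) * (int k - 2)) \<le> real_of_int (2 * (int k - 1) * int q)"
      using bound by (simp only: of_int_le_iff)
    then have "(real n - 4) * (real k - 2) \<le> 2 * (real k - 1) * real q" by simp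
    then have "real n * ((real n - 4) * (real k - 2)) \<le> real n * (2 * (real k - 1) * real q)"
      by (intro mult_left_mono) auto
    then show ?thesis using assms(1,4) q(2) by (simp add: divide_simps) (simp add: algebra_simps)
  qed
  finally show ?thesis .
qed

end
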